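(* Let $n\ge 2$ be an integer, $A\subseteq L_n$, and let $B\subseteq L_n\setminus A$ be a closed uncountable subset of $(L_n,\tau_E|_{L_n})$. Then $(X_n,\tau(A))$ is neither normal nor countably paracompact.
   Context: For $\overline{x},\overline{a}\in\mathbb R^n$ let $|\overline{x}-\overline{a}|$ be the Euclidean distance and $B(\overline{a},\epsilon)=\{\overline{x}\in\mathbb R^n:|\overline{x}-\overline{a}|<\epsilon\}$. Let $P_n=\{\overline{x}\in\mathbb R^n: x_n>0\}$, $L_n=\{\overline{x}\in\mathbb R^n: x_n=0\}$, $X_n=P_n\cup L_n$, and let $\tau_E$ denote the Euclidean topology on $X_n$. For $\overline{a}\in L_n$ and $\epsilon>0$ put $\overline{a(\epsilon)}=(a_1,\dots,a_{n-1},\epsilon)$ and $\tilde B(\overline{a},\epsilon)=\{\overline{a}\}\cup B(\overline{a(\epsilon)},\epsilon)$. For $A\subseteq L_n$, the topology $\tau(A)$ on $X_n$ is generated by the local bases: at $\overline{a}\in P_n$, the sets $B(\overline{a},\epsilon)$ with $0<\epsilon<a_n$; at $\overline{a}\in A$, the sets $B(\overline{a},\epsilon)\cap X_n$ with $\epsilon>0$; at $\overline{a}\in L_n\setminus A$, the sets $\tilde B(\overline{a},\epsilon)$ with $\epsilon>0$. *)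

theory Defs
  imports "HOL-Analysis.Analysis"
begin

text \<open>Points of R^n are represented as pairs (x', x_n) in (real^'m) \<times> real, where
  n - 1 = CARD('m).  The product norm on this type is the Euclidean (L2) one,
  so ball p e is the Euclidean ball B(p,e).\<close>

definition Pn :: "((real^'m) \<times> real) set" where
  "Pn = {p. snd p > 0}"

definition Ln :: "((real^'m) \<times> real) set" where
  "Ln = {p. snd p = 0}"

definition Xn :: "((real^'m) \<times> real) set" where
  "Xn = Pn \<union> Ln"

definition tball :: "(real^'m) \<times> real \<Rightarrow> real \<Rightarrow> ((real^'m) \<times> real) set" where
  "tball a e = insert a (ball (fst a, e) e)"

definition tau_base :: "((real^'m) \<times> real) set \<Rightarrow> (real^'m) \<times> real
    \<Rightarrow> ((real^'m) \<times> real) set \<Rightarrow> bool" where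
  "tau_base A a U \<longleftrightarrow>
     (a \<in> Pn \<and> (\<exists>e. 0 < e \<and> e < snd a \<and> U = ball a e)) \<or>
     (a \<in> Ln \<inter> A \<and> (\<exists>e>0. U = ball a e \<inter> Xn)) \<or>
     (a \<in> Ln - A \<and> (\<exists>e>0. U = tball a e))"

definition tau :: "((real^'m) \<times> real) set \<Rightarrow> ((real^'m) \<times> real) topology" where
  "tau A = topology (\<lambda>U. U \<subseteq> Xn \<and> (\<forall>x\<in>U. \<exists>V. tau_base A x V \<and> V \<subseteq> U))"

definition countably_paracompact :: "'a topology \<Rightarrow> bool" where
  "countably_paracompact X \<longleftrightarrow>
     (\<forall>\<U>. countable \<U> \<and> (\<forall>U\<in>\<U>. openin X U) \<and> \<Union>\<U> = topspace X \<longrightarrow>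
        (\<exists>\<V>. (\<forall>V\<in>\<V>. openin X V) \<and> \<Union>\<V> = topspace X \<and>
              (\<forall>V\<in>\<V>. \<exists>U\<in>\<U>. V \<subseteq> U) \<and> locally_finite_in X \<V>))"

lemma tball_mono:
  assumes "e \<le> e'" shows "tball a e \<subseteq> tball a e'"
proof
  fix y assume "y \<in> tball a e"
  then consider "y = a" | "dist (fst a, e) y < e" by (auto simp: tball_def)
  then show "y \<in> tball a e'"
  proof cases
    case 2
    have "dist (fst a, e') (fst a, e) = e' - e"
      using assms by (simp add: dist_Pair_Pair dist_real_def)
    then have "dist (fst a, e') y \<le> (e' - e) + dist (fst a, e) y"
      by (metis dist_triangle)
    with 2 show ?thesis by (simp add: tball_def)
  qed (simp add: tball_def)
qed

lemma tau_base_P: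
  "a \<in> Pn \<Longrightarrow> tau_base A a U \<longleftrightarrow> (\<exists>e. 0 < e \<and> e < snd a \<and> U = ball a e)"
  unfolding tau_base_def Pn_def Ln_def by auto

lemma tau_base_A:
  "a \<in> Ln \<inter> A \<Longrightarrow> tau_base A a U \<longleftrightarrow> (\<exists>e>0. U = ball a e \<inter> Xn)"
  unfolding tau_base_def Pn_def Ln_def by auto

lemma tau_base_LA:
  "a \<in> Ln - A \<Longrightarrow> tau_base A a U \<longleftrightarrow> (\<exists>e>0. U = tball a e)"
  unfolding tau_base_def Pn_def Ln_def by auto

lemma tau_base_directed:
  assumes U: "tau_base A a U" and V: "tau_base A a V"
  shows "\<exists>W. tau_base A a W \<and> W \<subseteq> U \<inter> V"
proof (cases "a \<in> Pn")
  case True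
  obtain e1 where e1: "0<e1" "e1 < snd a" "U = ball a e1" using tau_base_P[OF True, of A U] U by auto
  obtain e2 where e2: "0<e2" "e2 < snd a" "V = ball a e2" using tau_base_P[OF True, of A V] V by auto
  have "tau_base A a (ball a (min e1 e2))"
    unfolding tau_base_P[OF True] using e1 e2 by (intro exI[of _ "min e1 e2"]) simp
  moreover have "ball a (min e1 e2) \<subseteq> U \<inter> V" using e1 e2 by (simp add: subset_ball)
  ultimately show ?thesis by blast
next
  case nP: False
  have "a \<in> Pn \<or> a \<in> Ln" using U unfolding tau_base_def by (elim disjE conjE) simp_all
  then have "a \<in> Ln" using nP by simp
  show ?thesis
  proof (cases "a \<in> A")
    case True
    then have aA: "a \<in> Ln \<inter> A" using \<open>a \<in> Ln\<close> by blast
    obtain e1 where e1: "0<e1" "U = ball a e1 \<inter> Xn" using tau_base_A[OF aA, of U] U by auto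
    obtain e2 where e2: "0<e2" "V = ball a e2 \<inter> Xn" using tau_base_A[OF aA, of V] V by auto
    have "tau_base A a (ball a (min e1 e2) \<inter> Xn)"
      unfolding tau_base_A[OF aA] using e1 e2 by (intro exI[of _ "min e1 e2"]) simp
    moreover have "ball a (min e1 e2) \<subseteq> ball a e1" "ball a (min e1 e2) \<subseteq> ball a e2"
      by (simp_all add: subset_ball)
    then have "ball a (min e1 e2) \<inter> Xn \<subseteq> U \<inter> V" using e1 e2 by blast
    ultimately show ?thesis by blast
  next
    case False
    then have aA: "a \<in> Ln - A" using \<open>a \<in> Ln\<close> by blast
    obtain e1 where e1: "0<e1" "U = tball a e1" using tau_base_LA[OF aA, of U] U by auto
    obtain e2 where e2: "0<e2" "V = tball a e2" using tau_base_LA[OF aA, of V] V by auto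
    have "tau_base A a (tball a (min e1 e2))"
      unfolding tau_base_LA[OF aA] using e1 e2 by (intro exI[of _ "min e1 e2"]) simp
    moreover have "tball a (min e1 e2) \<subseteq> U \<inter> V"
      using tball_mono[of "min e1 e2" e1 a] tball_mono[of "min e1 e2" e2 a] e1 e2 by simp
    ultimately show ?thesis by blast
  qed
qed

lemma tau_open_Int:
  assumes S: "S \<subseteq> Xn \<and> (\<forall>x\<in>S. \<exists>V. tau_base A x V \<and> V \<subseteq> S)"
     and T: "T \<subseteq> Xn \<and> (\<forall>x\<in>T. \<exists>V. tau_base A x V \<and> V \<subseteq> T)"
  shows "S \<inter> T \<subseteq> Xn \<and> (\<forall>x\<in>S \<inter> T. \<exists>V. tau_base A x V \<and> V \<subseteq> S \<inter> T)"
proof -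
  have "S \<inter> T \<subseteq> Xn" using S by auto
  moreover have "\<exists>V. tau_base A x V \<and> V \<subseteq> S \<inter> T" if x: "x \<in> S \<inter> T" for x
  proof -
    obtain U where U: "tau_base A x U" "U \<subseteq> S" using S x by auto
    obtain V where V: "tau_base A x V" "V \<subseteq> T" using T x by auto
    obtain W where W: "tau_base A x W" "W \<subseteq> U \<inter> V" using tau_base_directed[OF U(1) V(1)] by auto
    show ?thesis using U(2) V(2) W by blast
  qed
  ultimately show ?thesis by simp
qed

lemma tau_open_Union:
  assumes K: "\<forall>U\<in>K. U \<subseteq> Xn \<and> (\<forall>x\<in>U. \<exists>V. tau_base A x V \<and> V \<subseteq> U)"
  shows "\<Union>K \<subseteq> Xn \<and> (\<forall>x\<in>\<Union>K. \<exists>V. tau_base A x V \<and> V \<subseteq> \<Union>K)"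
proof -
  have "\<Union>K \<subseteq> Xn" using K by auto
  moreover have "\<exists>V. tau_base A x V \<and> V \<subseteq> \<Union>K" if x: "x \<in> \<Union>K" for x
  proof -
    obtain U where U: "U \<in> K" "x \<in> U" using x by auto
    obtain V where V: "tau_base A x V" "V \<subseteq> U" using bspec[OF K U(1)] U(2) by blast
    show ?thesis using U V by auto
  qed
  ultimately show ?thesis by simp
qed

lemma istopology_tau:
  "istopology (\<lambda>U. U \<subseteq> Xn \<and> (\<forall>x\<in>U. \<exists>V. tau_base A x V \<and> V \<subseteq> U))"
  unfolding istopology_def using tau_open_Int[of _ A] tau_open_Union[of _ A] by simp

lemma openin_tau:
  "openin (tau A) U \<longleftrightarrow> U \<subseteq> Xn \<and> (\<forall>x\<in>U. \<exists>V. tau_base A x V \<and> V \<subseteq> U)"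
  unfolding tau_def using istopology_tau[of A] by (simp add: topology_inverse')

end

theory Submission
  imports Defs
begin

(* Write B = C \<times> {0}. Then C is closed and uncountable, so it contains a nonempty perfect
   closed set K, which has a countable dense subset Q. Every subset of B is tau(A)-closed,
   because a point of Ln - A has tangent-ball neighbourhoods meeting Ln only in that point.
   The heart of the proof is a Baire category argument on K: however positive radii are
   assigned to the tangent balls at the points of K, some c in K - Q has a tangent ball
   meeting the tangent balls at infinitely many points of Q, since tangent balls at nearby
   points of Ln always meet. If Q \<times> 0 and (K - Q) \<times> 0 had disjoint neighbourhoods, their
   tangent balls would give radii with no such meeting at all. If tau(A) were countably
   paracompact, a locally finite refinement of the countable open cover by the complements
   of the tails {q_j, q_(j+1), ...} \<times> 0 of an enumeration of Q would give radii with only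
   finitely many meetings at each c. *)

lemma closed_uncountable_contains_perfect:
  fixes C :: "'a::{metric_space,second_countable_topology} set"
  assumes "closed C" "uncountable C"
  obtains K where "closed K" "K \<subseteq> C" "K \<noteq> {}" "\<And>x. x \<in> K \<Longrightarrow> x islimpt K"
proof -
  \<comment> \<open>K is the set of condensation points of C.\<close>
  define \<F> where "\<F> = {ball x e | x e. countable (C \<inter> ball x e)}"
  obtain \<F>' where \<F>': "\<F>' \<subseteq> \<F>" "countable \<F>'" "\<Union>\<F>' = \<Union>\<F>"
    using Lindelof[of \<F>] by (auto simp: \<F>_def)
  have "C \<inter> \<Union>\<F> = (\<Union>F\<in>\<F>'. C \<inter> F)"
    using \<F>'(3) by auto
  moreover have "countable (\<Union>F\<in>\<F>'. C \<inter> F)"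
    using \<F>' by (intro countable_UN) (auto simp: \<F>_def)
  ultimately have "countable (C \<inter> \<Union>\<F>)"
    by simp
  define K where "K = C - \<Union>\<F>"
  have "closed K"
    unfolding K_def using \<open>closed C\<close> by (intro closed_Diff open_Union) (auto simp: \<F>_def)
  moreover have "K \<noteq> {}"
    using \<open>countable (C \<inter> \<Union>\<F>)\<close> assms(2) by (metis Diff_eq_empty_iff K_def inf.absorb1)
  moreover have "x islimpt K" if "x \<in> K" for x
    unfolding islimpt_eq_infinite_ball
  proof (intro allI impI)
    fix e :: real assume "e > 0"
    have "ball x e \<notin> \<F>"
      using that \<open>e > 0\<close> by (auto simp: K_def)
    then have "uncountable (C \<inter> ball x e)"
      by (auto simp: \<F>_def)
    moreover have "C \<inter> ball x e \<subseteq> (K \<inter> ball x e) \<union> (C \<inter> \<Union>\<F>)"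
      by (auto simp: K_def)
    ultimately show "infinite (K \<inter> ball x e)"
      using \<open>countable (C \<inter> \<Union>\<F>)\<close> by (metis countable_Un countable_finite countable_subset)
  qed
  moreover have "K \<subseteq> C"
    by (auto simp: K_def)
  ultimately show thesis
    using that by blast
qed

lemma Baire_countable_closed_cover:
  fixes K :: "'a::{real_normed_vector,heine_borel} set"
  assumes "closed K" "K \<noteq> {}" "countable \<F>" "K \<subseteq> \<Union>\<F>"
  obtains F x e where "F \<in> \<F>" "x \<in> K" "e > 0" "K \<inter> ball x e \<subseteq> closure F"
proof -
  have "\<Union>\<F> \<subseteq> (\<Union>F\<in>\<F>. closure F)"
    using closure_subset by blast
  then have "\<Union>((\<lambda>F. K \<inter> closure F) ` \<F>) = topspace (top_of_set K)"
    using assms(4) by auto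
  then have "top_of_set K interior_of \<Union>((\<lambda>F. K \<inter> closure F) ` \<F>) \<noteq> {}"
    using assms(2) by (metis interior_of_topspace topspace_euclidean_subtopology)
  moreover have "completely_metrizable_space (top_of_set K)"
    using assms(1) by (simp add: completely_metrizable_space_closedin completely_metrizable_space_euclidean)
  moreover have "closedin (top_of_set K) (K \<inter> closure F)" for F
    by (simp add: closedin_closed_Int)
  ultimately have "\<exists>F\<in>\<F>. top_of_set K interior_of (K \<inter> closure F) \<noteq> {}"
    using Baire_category_alt[of "top_of_set K" "(\<lambda>F. K \<inter> closure F) ` \<F>"] assms(3) by auto
  then obtain F where "F \<in> \<F>" and "top_of_set K interior_of (K \<inter> closure F) \<noteq> {}"
    by blast
  then obtain U x where "open U" "x \<in> K \<inter> U" "K \<inter> U \<subseteq> closure F"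
    unfolding interior_of_def openin_open by auto
  moreover obtain e where "e > 0" "ball x e \<subseteq> U"
    using \<open>open U\<close> \<open>x \<in> K \<inter> U\<close> open_contains_ball by blast
  ultimately show thesis
    using that \<open>F \<in> \<F>\<close> by blast
qed

lemma Baire_perfect_countable_cover:
  fixes K :: "'a::{real_normed_vector,heine_borel} set"
  assumes "closed K" "K \<noteq> {}" "\<And>x. x \<in> K \<Longrightarrow> x islimpt K"
    and "countable Q" "countable \<G>" "K \<subseteq> Q \<union> \<Union>\<G>"
  obtains G x e where "G \<in> \<G>" "x \<in> K" "e > 0" "K \<inter> ball x e \<subseteq> closure G"
proof -
  have "countable (\<G> \<union> (\<lambda>q. {q}) ` Q)" "K \<subseteq> \<Union>(\<G> \<union> (\<lambda>q. {q}) ` Q)"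
    using assms(4-6) by auto
  then obtain F x e where F: "F \<in> \<G> \<union> (\<lambda>q. {q}) ` Q" "x \<in> K" "e > 0" "K \<inter> ball x e \<subseteq> closure F"
    using Baire_countable_closed_cover[OF assms(1,2)] by blast
  have "infinite (K \<inter> ball x e)"
    using assms(3)[OF F(2)] F(3) by (simp add: islimpt_eq_infinite_ball)
  have "F \<notin> (\<lambda>q. {q}) ` Q"
  proof
    assume "F \<in> (\<lambda>q. {q}) ` Q"
    then obtain q where "F = {q}"
      by blast
    then have "K \<inter> ball x e \<subseteq> {q}"
      using F(4) by simp
    with \<open>infinite (K \<inter> ball x e)\<close> show False
      using finite_subset by blast
  qed
  then show thesis
    using that F by blast
qed

lemma locally_finite_in_expansion:
  assumes "locally_finite_in X \<V>" "D \<subseteq> \<Union>\<V>" "\<And>V. V \<in> \<V> \<Longrightarrow> finite (D \<inter> V)"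
  obtains W where "\<And>d. d \<in> D \<Longrightarrow> W d \<in> \<V> \<and> d \<in> W d"
    "\<And>x. x \<in> topspace X \<Longrightarrow> \<exists>N. openin X N \<and> x \<in> N \<and> finite {d \<in> D. W d \<inter> N \<noteq> {}}"
proof -
  have "\<forall>d\<in>D. \<exists>V. V \<in> \<V> \<and> d \<in> V"
    using assms(2) by blast
  then have "\<exists>W. \<forall>d\<in>D. W d \<in> \<V> \<and> d \<in> W d"
    by (rule bchoice)
  then obtain W where W: "\<And>d. d \<in> D \<Longrightarrow> W d \<in> \<V> \<and> d \<in> W d"
    by blast
  have "\<exists>N. openin X N \<and> x \<in> N \<and> finite {d \<in> D. W d \<inter> N \<noteq> {}}" if "x \<in> topspace X" for x
  proof -
    obtain N where N: "openin X N" "x \<in> N" "finite {V \<in> \<V>. V \<inter> N \<noteq> {}}"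
      using assms(1) \<open>x \<in> topspace X\<close> unfolding locally_finite_in_def by blast
    have "{d \<in> D. W d \<inter> N \<noteq> {}} \<subseteq> (\<Union>V \<in> {V \<in> \<V>. V \<inter> N \<noteq> {}}. D \<inter> V)"
      using W by blast
    moreover have "finite (\<Union>V \<in> {V \<in> \<V>. V \<inter> N \<noteq> {}}. D \<inter> V)"
      using N(3) assms(3) by (intro finite_UN_I) auto
    ultimately show ?thesis
      using N(1,2) finite_subset by blast
  qed
  with W show thesis
    using that by blast
qed

lemma countably_paracompact_locally_finite_expansion:
  assumes cp: "countably_paracompact X" and D: "countable D" "D \<subseteq> topspace X"
    and closed: "\<And>S. S \<subseteq> D \<Longrightarrow> closedin X S"
  obtains W where "\<And>d. d \<in> D \<Longrightarrow> openin X (W d) \<and> d \<in> W d"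
    "\<And>x. x \<in> topspace X \<Longrightarrow> \<exists>N. openin X N \<and> x \<in> N \<and> finite {d \<in> D. W d \<inter> N \<noteq> {}}"
proof -
  \<comment> \<open>The complements U j of the tails of an enumeration of D form a countable open cover,
    and each U j contains only finitely many points of D.\<close>
  define U where "U j = topspace X - {d \<in> D. to_nat_on D d \<ge> j}" for j
  have "openin X (U j)" for j
    using closed[of "{d \<in> D. to_nat_on D d \<ge> j}"] by (auto simp: U_def closedin_def)
  moreover have "x \<in> U (Suc (to_nat_on D x))" if "x \<in> topspace X" for x
    using that by (auto simp: U_def)
  then have "\<Union>(range U) = topspace X"
    unfolding U_def by blast
  ultimately have "countable (range U) \<and> (\<forall>U'\<in>range U. openin X U') \<and> \<Union>(range U) = topspace X"
    by simp
  from cp[unfolded countably_paracompact_def, THEN spec[of _ "range U"], THEN mp, OF this]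
  obtain \<V> where \<V>: "\<forall>V\<in>\<V>. openin X V" "\<Union>\<V> = topspace X"
      "\<forall>V\<in>\<V>. \<exists>U'\<in>range U. V \<subseteq> U'" "locally_finite_in X \<V>"
    by (elim exE conjE)
  have "finite (D \<inter> V)" if V: "V \<in> \<V>" for V
  proof -
    obtain j where "V \<subseteq> U j"
      using \<V>(3) V by blast
    then have "D \<inter> V \<subseteq> to_nat_on D -` {..<j} \<inter> D"
      by (auto simp: U_def)
    moreover have "finite (to_nat_on D -` {..<j} \<inter> D)"
      using D(1) by (intro finite_vimage_IntI) auto
    ultimately show ?thesis
      using finite_subset by blast
  qed
  moreover have "D \<subseteq> \<Union>\<V>"
    using D(2) \<V>(2) by simp
  ultimately obtain W where W: "\<And>d. d \<in> D \<Longrightarrow> W d \<in> \<V> \<and> d \<in> W d"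
    and "\<And>x. x \<in> topspace X \<Longrightarrow> \<exists>N. openin X N \<and> x \<in> N \<and> finite {d \<in> D. W d \<inter> N \<noteq> {}}"
    using locally_finite_in_expansion[OF \<V>(4)] by blast
  moreover have "openin X (W d) \<and> d \<in> W d" if "d \<in> D" for d
    using W[OF that] \<V>(1) by blast
  ultimately show thesis
    using that by blast
qed

lemma Pn_Int_Ln: "Pn \<inter> Ln = {}"
  by (auto simp: Pn_def Ln_def)

lemma ball_subset_Pn:
  assumes "r \<le> snd x" shows "ball x r \<subseteq> Pn"
proof
  fix y assume "y \<in> ball x r"
  then have "dist (snd x) (snd y) < r"
    using dist_snd_le[of x y] by simp
  with assms show "y \<in> Pn"
    by (auto simp: Pn_def dist_real_def abs_less_iff)
qed

lemma tball_subset_insert_Pn: "tball a e \<subseteq> insert a Pn"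
  using ball_subset_Pn[of e "(fst a, e)"] by (auto simp: tball_def)

lemma openin_tau_Xn_Diff:
  assumes B: "B \<subseteq> Ln - A" "closedin (top_of_set Ln) B" and "S \<subseteq> B"
  shows "openin (tau A) (Xn - S)"
  unfolding openin_tau
proof (intro conjI ballI)
  fix x assume x: "x \<in> Xn - S"
  have Pn_subset: "Pn \<subseteq> Xn - S"
    using B(1) \<open>S \<subseteq> B\<close> Pn_Int_Ln by (auto simp: Xn_def)
  consider "x \<in> Pn" | "x \<in> Ln \<inter> A" | "x \<in> Ln - A"
    using x by (auto simp: Xn_def)
  then show "\<exists>V. tau_base A x V \<and> V \<subseteq> Xn - S"
  proof cases
    case 1
    then have "tau_base A x (ball x (snd x / 2))"
      by (auto simp: tau_base_P Pn_def intro!: exI[of _ "snd x / 2"])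
    moreover have "ball x (snd x / 2) \<subseteq> Pn"
      using 1 by (intro ball_subset_Pn) (simp add: Pn_def)
    ultimately show ?thesis
      using Pn_subset by blast
  next
    case 2
    obtain T where T: "closed T" "B = T \<inter> Ln"
      using B(2) by (auto simp: closedin_closed)
    then have "x \<in> - T"
      using 2 B(1) by blast
    then obtain e where e: "e > 0" "ball x e \<subseteq> - T"
      using T(1) open_contains_ball by (metis open_Compl)
    then have "tau_base A x (ball x e \<inter> Xn)"
      using 2 by (auto simp: tau_base_A intro!: exI[of _ e])
    moreover have "ball x e \<inter> Xn \<subseteq> Xn - S"
      using e(2) T(2) \<open>S \<subseteq> B\<close> by blast
    ultimately show ?thesis by blast
  next
    case 3
    then have "tau_base A x (tball x 1)"
      by (auto simp: tau_base_LA intro!: exI[of _ 1])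
    moreover have "tball x 1 \<subseteq> Xn - S"
      using tball_subset_insert_Pn[of x 1] x Pn_subset by blast
    ultimately show ?thesis by blast
  qed
qed blast

lemma topspace_tau: "topspace (tau A) = Xn"
proof
  have "openin (tau A) (topspace (tau A))"
    by (rule openin_topspace)
  then show "topspace (tau A) \<subseteq> Xn"
    unfolding openin_tau by (rule conjunct1)
  have "openin (tau A) (Xn - {})"
    by (rule openin_tau_Xn_Diff[of "{}"]) auto
  then show "Xn \<subseteq> topspace (tau A)"
    by (metis Diff_empty openin_subset)
qed

lemma closedin_tau_subset:
  assumes "B \<subseteq> Ln - A" "closedin (top_of_set Ln) B" "S \<subseteq> B"
  shows "closedin (tau A) S"
proof -
  have "S \<subseteq> Xn"
    using assms(1,3) by (auto simp: Xn_def)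
  then show ?thesis
    using openin_tau_Xn_Diff[OF assms] by (simp add: closedin_def topspace_tau)
qed

lemma openin_tau_tball_radii:
  assumes "\<And>c. c \<in> S \<Longrightarrow> openin (tau A) (W c) \<and> (c, 0) \<in> W c \<and> (c, 0) \<notin> A"
  shows "\<exists>r. \<forall>c\<in>S. r c > 0 \<and> tball (c, 0) (r c) \<subseteq> W c"
proof -
  have "\<forall>c\<in>S. \<exists>r>0. tball (c, 0) r \<subseteq> W c"
  proof
    fix c assume c: "c \<in> S"
    have "(c, 0) \<in> Ln - A"
      using assms[OF c] by (simp add: Ln_def)
    moreover obtain V where "tau_base A (c, 0) V" "V \<subseteq> W c"
      using assms[OF c] unfolding openin_tau by blast
    ultimately show "\<exists>r>0. tball (c, 0) r \<subseteq> W c"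
      by (auto simp: tau_base_LA)
  qed
  then show ?thesis
    by (rule bchoice)
qed

lemma tball_Int_nonempty:
  fixes a b :: "real^'m"
  assumes "dist a b < min r q" "r > 0" "q > 0"
  shows "tball (a, 0) r \<inter> tball (b, 0) q \<noteq> {}"
proof -
  \<comment> \<open>The point (a, min r q) lies in both balls.\<close>
  define t where "t = min r q"
  have t: "0 < t" "t \<le> r" "t \<le> q" "dist b a < t"
    using assms by (auto simp: t_def dist_commute)
  have "dist (a, r) (a, t) < r"
    using t by (simp add: dist_Pair_Pair dist_real_def)
  moreover have "(dist b a)\<^sup>2 + (q - t)\<^sup>2 < q\<^sup>2"
  proof -
    have "(dist b a)\<^sup>2 < t\<^sup>2"
      using t(4) by (intro power_strict_mono) auto
    moreover have "t * t \<le> q * t"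
      using t by (intro mult_right_mono) auto
    moreover have "(q - t)\<^sup>2 = q\<^sup>2 - 2 * q * t + t\<^sup>2"
      by (simp add: power2_diff)
    ultimately show ?thesis
      unfolding power2_eq_square by linarith
  qed
  then have "sqrt ((dist b a)\<^sup>2 + (q - t)\<^sup>2) < sqrt (q\<^sup>2)"
    by (rule real_sqrt_less_mono)
  then have "dist (b, q) (a, t) < q"
    using t by (simp add: dist_Pair_Pair dist_real_def dist_commute)
  ultimately show ?thesis
    by (auto simp: tball_def)
qed

definition tball_avoiding :: "(real^'m \<Rightarrow> real) \<Rightarrow> (real^'m) set \<Rightarrow> real \<Rightarrow> (real^'m) set"
  where "tball_avoiding \<sigma> T r = {c. \<forall>q\<in>T. tball (c, 0) r \<inter> tball (q, 0) (\<sigma> q) = {}}"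

lemma notin_closure_tball_avoiding:
  assumes "r > 0" "q \<in> T" "\<sigma> q > 0"
  shows "q \<notin> closure (tball_avoiding \<sigma> T r)"
proof
  assume "q \<in> closure (tball_avoiding \<sigma> T r)"
  moreover have "min r (\<sigma> q) > 0"
    using assms by simp
  ultimately obtain c where c: "c \<in> tball_avoiding \<sigma> T r" "dist c q < min r (\<sigma> q)"
    unfolding closure_approachable by blast
  then have "tball (c, 0) r \<inter> tball (q, 0) (\<sigma> q) \<noteq> {}"
    using assms by (intro tball_Int_nonempty) auto
  with c(1) assms(2) show False
    by (auto simp: tball_avoiding_def)
qed

lemma tball_avoiding_exists:
  assumes "\<rho> > 0" "finite {q \<in> Q. tball (c, 0) \<rho> \<inter> tball (q, 0) (\<sigma> q) \<noteq> {}}"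
  shows "\<exists>(k::nat) S. finite S \<and> S \<subseteq> Q \<and> c \<in> tball_avoiding \<sigma> (Q - S) (1 / Suc k)"
proof -
  define S where "S = {q \<in> Q. tball (c, 0) \<rho> \<inter> tball (q, 0) (\<sigma> q) \<noteq> {}}"
  obtain k :: nat where "inverse (Suc k) < \<rho>"
    using reals_Archimedean assms(1) by blast
  then have "tball (c, 0) (1 / Suc k) \<subseteq> tball (c, 0) \<rho>"
    by (intro tball_mono) (simp add: field_simps)
  then have "c \<in> tball_avoiding \<sigma> (Q - S) (1 / Suc k)"
    by (auto simp: tball_avoiding_def S_def)
  moreover have "finite S" "S \<subseteq> Q"
    using assms(2) by (auto simp: S_def)
  ultimately show ?thesis
    by blast
qed

lemma tballs_meet_infinitely:
  fixes K Q :: "(real^'m) set" and \<rho> \<sigma> :: "real^'m \<Rightarrow> real"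
  assumes K: "closed K" "K \<noteq> {}" "\<And>x. x \<in> K \<Longrightarrow> x islimpt K"
    and Q: "countable Q" "Q \<subseteq> K" "K \<subseteq> closure Q"
    and radii: "\<And>c. c \<in> K - Q \<Longrightarrow> \<rho> c > 0" "\<And>q. q \<in> Q \<Longrightarrow> \<sigma> q > 0"
  shows "\<exists>c \<in> K - Q. infinite {q \<in> Q. tball (c, 0) (\<rho> c) \<inter> tball (q, 0) (\<sigma> q) \<noteq> {}}"
proof (rule ccontr)
  assume "\<not> ?thesis"
  then have fin: "finite {q \<in> Q. tball (c, 0) (\<rho> c) \<inter> tball (q, 0) (\<sigma> q) \<noteq> {}}"
    if "c \<in> K - Q" for c
    using that by blast
  \<comment> \<open>Then K is covered by Q and countably many sets tball_avoiding, and Baire makes one of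
    them dense near a point of Q that it avoids.\<close>
  define \<G> where "\<G> = (\<lambda>(k::nat, S). tball_avoiding \<sigma> (Q - S) (1 / Suc k)) ` (UNIV \<times> {S. finite S \<and> S \<subseteq> Q})"
  have "countable \<G>"
    using countable_Collect_finite_subset[OF Q(1)] by (simp add: \<G>_def)
  moreover have "K \<subseteq> Q \<union> \<Union>\<G>"
  proof
    fix c assume "c \<in> K"
    show "c \<in> Q \<union> \<Union>\<G>"
    proof (cases "c \<in> Q")
      case False
      then obtain k S where "finite S" "S \<subseteq> Q" "c \<in> tball_avoiding \<sigma> (Q - S) (1 / Suc k)"
        using tball_avoiding_exists[OF radii(1) fin] \<open>c \<in> K\<close> by blast
      then show ?thesis
        unfolding \<G>_def by blast
    qed simp
  qed
  ultimately obtain G x e where G: "G \<in> \<G>" "x \<in> K" "e > 0" "K \<inter> ball x e \<subseteq> closure G"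
    using Baire_perfect_countable_cover[OF K Q(1)] by blast
  then obtain k S where kS: "G = tball_avoiding \<sigma> (Q - S) (1 / Suc k)" "finite S"
    by (auto simp: \<G>_def)
  have "open (ball x e - S)"
    using kS(2) by (intro open_Diff finite_imp_closed) auto
  moreover have "K \<inter> (ball x e - S) \<noteq> {}"
    using K(3)[OF G(2)] G(3) kS(2) unfolding islimpt_eq_infinite_ball
    by (metis Diff_Int_distrib Diff_eq_empty_iff Int_Diff finite_subset)
  ultimately obtain q where q: "q \<in> Q - S" "q \<in> ball x e"
    using Q(3) open_Int_closure_eq_empty by blast
  then have "q \<in> closure G"
    using G(4) Q(2) by blast
  then show False
    using notin_closure_tball_avoiding[of "1 / Suc k" q "Q - S" \<sigma>] q(1) radii(2) kS(1) by simp
qed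

lemma closedin_Ln_uncountable_contains_perfect:
  fixes B :: "((real^'m) \<times> real) set"
  assumes "closedin (top_of_set Ln) B" "uncountable B"
  obtains K Q :: "(real^'m) set"
  where "closed K" "K \<noteq> {}" "\<And>x. x \<in> K \<Longrightarrow> x islimpt K"
    and "countable Q" "Q \<subseteq> K" "K \<subseteq> closure Q"
    and "\<And>c. c \<in> K \<Longrightarrow> (c, 0) \<in> B"
proof -
  define C where "C = {c. (c, 0::real) \<in> B}"
  obtain T where T: "closed T" "B = T \<inter> Ln"
    using assms(1) by (auto simp: closedin_closed)
  then have "C = (\<lambda>c. (c, 0::real)) -` T"
    by (auto simp: C_def Ln_def)
  then have "closed C"
    using T(1) by (auto intro!: continuous_closed_vimage continuous_intros)
  have "B \<subseteq> (\<lambda>c. (c, 0)) ` C"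
  proof
    fix p assume "p \<in> B"
    moreover have "p = (fst p, 0)"
      using \<open>p \<in> B\<close> T(2) by (auto simp: Ln_def prod_eq_iff)
    ultimately show "p \<in> (\<lambda>c. (c, 0)) ` C"
      unfolding C_def by (metis imageI mem_Collect_eq)
  qed
  then have "uncountable C"
    using assms(2) countable_image countable_subset by blast
  obtain K where K: "closed K" "K \<subseteq> C" "K \<noteq> {}" "\<And>x. x \<in> K \<Longrightarrow> x islimpt K"
    using closed_uncountable_contains_perfect[OF \<open>closed C\<close> \<open>uncountable C\<close>] by blast
  obtain Q where "countable Q" "Q \<subseteq> K" "K \<subseteq> closure Q"
    using separable by blast
  with K show thesis
    using that unfolding C_def by blast
qed

lemma tau_neighbourhoods_meet_infinitely:
  fixes K Q :: "(real^'m) set"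
  assumes K: "closed K" "K \<noteq> {}" "\<And>x. x \<in> K \<Longrightarrow> x islimpt K"
    and Q: "countable Q" "Q \<subseteq> K" "K \<subseteq> closure Q"
    and KA: "\<And>c. c \<in> K \<Longrightarrow> (c, 0) \<notin> A"
    and V: "\<And>c. c \<in> K - Q \<Longrightarrow> openin (tau A) (V c) \<and> (c, 0) \<in> V c"
    and U: "\<And>q. q \<in> Q \<Longrightarrow> openin (tau A) (U q) \<and> (q, 0) \<in> U q"
  shows "\<exists>c \<in> K - Q. infinite {q \<in> Q. V c \<inter> U q \<noteq> {}}"
proof -
  have "\<exists>\<rho>. \<forall>c\<in>K - Q. \<rho> c > 0 \<and> tball (c, 0) (\<rho> c) \<subseteq> V c"
    using V KA by (intro openin_tau_tball_radii) blast
  then obtain \<rho> where \<rho>: "\<And>c. c \<in> K - Q \<Longrightarrow> \<rho> c > 0 \<and> tball (c, 0) (\<rho> c) \<subseteq> V c"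
    by blast
  have "\<exists>\<sigma>. \<forall>q\<in>Q. \<sigma> q > 0 \<and> tball (q, 0) (\<sigma> q) \<subseteq> U q"
    using U KA Q(2) by (intro openin_tau_tball_radii) blast
  then obtain \<sigma> where \<sigma>: "\<And>q. q \<in> Q \<Longrightarrow> \<sigma> q > 0 \<and> tball (q, 0) (\<sigma> q) \<subseteq> U q"
    by blast
  have "\<exists>c \<in> K - Q. infinite {q \<in> Q. tball (c, 0) (\<rho> c) \<inter> tball (q, 0) (\<sigma> q) \<noteq> {}}"
    using \<rho> \<sigma> by (intro tballs_meet_infinitely[OF K Q]) auto
  then obtain c where c: "c \<in> K - Q"
    and "infinite {q \<in> Q. tball (c, 0) (\<rho> c) \<inter> tball (q, 0) (\<sigma> q) \<noteq> {}}"
    by blast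
  moreover have "{q \<in> Q. tball (c, 0) (\<rho> c) \<inter> tball (q, 0) (\<sigma> q) \<noteq> {}} \<subseteq> {q \<in> Q. V c \<inter> U q \<noteq> {}}"
    using \<rho>[OF c] \<sigma> by blast
  ultimately show ?thesis
    using c infinite_super by blast
qed

lemma tau_not_normal:
  fixes A B :: "((real^'m) \<times> real) set"
  assumes "B \<subseteq> Ln - A" "closedin (top_of_set Ln) B" "uncountable B"
  shows "\<not> normal_space (tau A)"
proof
  assume "normal_space (tau A)"
  obtain K Q :: "(real^'m) set"
    where K: "closed K" "K \<noteq> {}" "\<And>x. x \<in> K \<Longrightarrow> x islimpt K"
      and Q: "countable Q" "Q \<subseteq> K" "K \<subseteq> closure Q"
      and KB: "\<And>c. c \<in> K \<Longrightarrow> (c, 0) \<in> B"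
    using closedin_Ln_uncountable_contains_perfect[OF assms(2,3)] by blast
  have closed_image: "closedin (tau A) ((\<lambda>c. (c, 0)) ` S)" if "S \<subseteq> K" for S
    using KB that by (intro closedin_tau_subset[OF assms(1,2)]) blast
  have "disjnt ((\<lambda>c. (c, 0::real)) ` Q) ((\<lambda>c. (c, 0)) ` (K - Q))"
    by (auto simp: disjnt_def)
  with closed_image[OF Q(2)] closed_image[of "K - Q"]
  have "\<exists>U V. openin (tau A) U \<and> openin (tau A) V \<and>
      (\<lambda>c. (c, 0)) ` Q \<subseteq> U \<and> (\<lambda>c. (c, 0)) ` (K - Q) \<subseteq> V \<and> disjnt U V"
    using \<open>normal_space (tau A)\<close> unfolding normal_space_def by blast
  then obtain U V where UV: "openin (tau A) U" "openin (tau A) V"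
      "(\<lambda>c. (c, 0)) ` Q \<subseteq> U" "(\<lambda>c. (c, 0)) ` (K - Q) \<subseteq> V" "disjnt U V"
    by blast
  have "\<And>c. c \<in> K \<Longrightarrow> (c, 0) \<notin> A"
    using KB assms(1) by blast
  moreover have "\<And>c. c \<in> K - Q \<Longrightarrow> openin (tau A) V \<and> (c, 0) \<in> V"
    using UV(2,4) by blast
  moreover have "\<And>q. q \<in> Q \<Longrightarrow> openin (tau A) U \<and> (q, 0) \<in> U"
    using UV(1,3) by blast
  ultimately have "\<exists>c \<in> K - Q. infinite {q \<in> Q. V \<inter> U \<noteq> {}}"
    using tau_neighbourhoods_meet_infinitely[OF K Q, where V = "\<lambda>_. V" and U = "\<lambda>_. U"] by blast
  then have "V \<inter> U \<noteq> {}"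
    using infinite_imp_nonempty by blast
  with UV(5) show False
    by (auto simp: disjnt_def)
qed

lemma tau_not_countably_paracompact:
  fixes A B :: "((real^'m) \<times> real) set"
  assumes "B \<subseteq> Ln - A" "closedin (top_of_set Ln) B" "uncountable B"
  shows "\<not> countably_paracompact (tau A)"
proof
  assume cp: "countably_paracompact (tau A)"
  obtain K Q :: "(real^'m) set"
    where K: "closed K" "K \<noteq> {}" "\<And>x. x \<in> K \<Longrightarrow> x islimpt K"
      and Q: "countable Q" "Q \<subseteq> K" "K \<subseteq> closure Q"
      and KB: "\<And>c. c \<in> K \<Longrightarrow> (c, 0) \<in> B"
    using closedin_Ln_uncountable_contains_perfect[OF assms(2,3)] by blast
  have K_topspace: "(c, 0) \<in> topspace (tau A)" if "c \<in> K" for c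
    using KB[OF that] assms(1) by (auto simp: topspace_tau Xn_def)
  let ?D = "(\<lambda>q. (q, 0::real)) ` Q"
  have "countable ?D"
    using Q(1) by simp
  moreover have D_topspace: "?D \<subseteq> topspace (tau A)"
    using K_topspace Q(2) by blast
  moreover have D_closed: "closedin (tau A) S" if "S \<subseteq> ?D" for S
    using KB Q(2) that by (intro closedin_tau_subset[OF assms(1,2)]) blast
  ultimately obtain W where
    W: "\<And>d. d \<in> ?D \<Longrightarrow> openin (tau A) (W d) \<and> d \<in> W d" and
    lf: "\<And>x. x \<in> topspace (tau A) \<Longrightarrow> \<exists>N. openin (tau A) N \<and> x \<in> N \<and> finite {d \<in> ?D. W d \<inter> N \<noteq> {}}"
    using countably_paracompact_locally_finite_expansion[OF cp _ D_topspace D_closed] by blast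
  have "\<forall>c \<in> K - Q. \<exists>N. openin (tau A) N \<and> (c, 0) \<in> N \<and> finite {d \<in> ?D. W d \<inter> N \<noteq> {}}"
    using lf K_topspace by blast
  then have "\<exists>N. \<forall>c \<in> K - Q. openin (tau A) (N c) \<and> (c, 0) \<in> N c \<and> finite {d \<in> ?D. W d \<inter> N c \<noteq> {}}"
    by (rule bchoice)
  then obtain N where N: "\<And>c. c \<in> K - Q \<Longrightarrow>
      openin (tau A) (N c) \<and> (c, 0) \<in> N c \<and> finite {d \<in> ?D. W d \<inter> N c \<noteq> {}}"
    by blast
  have "\<And>c. c \<in> K \<Longrightarrow> (c, 0) \<notin> A"
    using KB assms(1) by blast
  moreover have "\<And>c. c \<in> K - Q \<Longrightarrow> openin (tau A) (N c) \<and> (c, 0) \<in> N c"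
    using N by blast
  moreover have "\<And>q. q \<in> Q \<Longrightarrow> openin (tau A) (W (q, 0)) \<and> (q, 0) \<in> W (q, 0)"
    using W by blast
  ultimately have "\<exists>c \<in> K - Q. infinite {q \<in> Q. N c \<inter> W (q, 0) \<noteq> {}}"
    using tau_neighbourhoods_meet_infinitely[OF K Q, where V = N and U = "\<lambda>q. W (q, 0)"] by blast
  then obtain c where c: "c \<in> K - Q" and inf: "infinite {q \<in> Q. N c \<inter> W (q, 0) \<noteq> {}}"
    by blast
  have "(\<lambda>q. (q, 0)) ` {q \<in> Q. N c \<inter> W (q, 0) \<noteq> {}} \<subseteq> {d \<in> ?D. W d \<inter> N c \<noteq> {}}"
    by blast
  then have "finite ((\<lambda>q. (q, 0::real)) ` {q \<in> Q. N c \<inter> W (q, 0) \<noteq> {}})"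
    using N[OF c] finite_subset by blast
  then show False
    using inf finite_imageD by (metis (no_types, lifting) inj_onI prod.inject)
qed

theorem mainTheorem8:
  fixes A B :: "((real^'m) \<times> real) set"
  assumes "A \<subseteq> Ln"
    and "B \<subseteq> Ln - A"
    and "closedin (subtopology euclidean Ln) B"
    and "uncountable B"
  shows "\<not> normal_space (tau A) \<and> \<not> countably_paracompact (tau A)"
  using tau_not_normal[OF assms(2-4)] tau_not_countably_paracompact[OF assms(2-4)] by blast

end
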